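(* Let $G$ be a finite simple graph. Then for every simplex $\sigma$ of $\mathrm{M}(G)$ and every codimension-one face $\tau$ of $\sigma$ with $J(m_\tau)<J(m_\sigma)$ one has $J(m_\tau)=J(m_\sigma)-1$; thus $\partial_d$ has bidegree $(-1,-1)$ on $\widehat{C}(G)$. Moreover $\partial_d\circ\partial_d=0$, so $(\widehat{C}(G),\partial_d)$ is a chain complex.
   Context: A finite simple graph $G$ is regarded as a simplicial complex of dimension at most $1$; its face poset $\mathcal{F}(G)$ is the directed graph with vertices the vertices and edges of $G$ and a directed edge $e\to v$ whenever $v$ is an endpoint of the edge $e$. A matching on $\mathcal{F}(G)$ is a set $m$ of edges of $\mathcal{F}(G)$, no two sharing an endpoint. Given a matching $m$, let $\mathcal{F}_m(G)$ be obtained from $\mathcal{F}(G)$ by reversing every edge in $m$; a directed cycle of $\mathcal{F}_m(G)$ (closed directed path without repeated vertices) is supported by $m$, and $J(m)$ is the number of directed cycles supported by $m$. The matching complex $\mathrm{M}(G)$ has vertex set the edges of $\mathcal{F}(G)$ and simplices the nonempty matchings; $m_\sigma$ denotes the matching of a simplex $\sigma$. Let $\widehat{C}_i^j(G)$ be the $\mathbb{F}_2$-vector space with basis the $i$-dimensional simplices $\sigma$ of $\mathrm{M}(G)$ with $J(m_\sigma)=j$, and $\widehat{C}(G)=\bigoplus_{i,j}\widehat{C}_i^j(G)$. The simplicial boundary $\partial$ sends $\sigma$ to the mod-2 sum of its codimension-one faces. $\partial_J(\sigma)$ is the sum of those faces $\tau$ with $J(m_\tau)=J(m_\sigma)$,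 and $\partial_d=\partial-\partial_J$. *)

theory Defs
  imports Main
begin

definition simple_graph :: "'a set \<Rightarrow> 'a set set \<Rightarrow> bool" where
  "simple_graph V E \<longleftrightarrow> finite V \<and> (\<forall>e\<in>E. e \<subseteq> V \<and> card e = 2)"

text \<open>Face poset F(G): vertices are Inl v (vertices of G) and Inr e (edges of G);
  a directed edge e \<rightarrow> v whenever v is an endpoint of e.\<close>
type_synonym 'a fnode = "'a + 'a set"
type_synonym 'a farc = "'a fnode \<times> 'a fnode"

definition fp_arcs :: "'a set set \<Rightarrow> 'a farc set" where
  "fp_arcs E = {(Inr e, Inl v) | e v. e \<in> E \<and> v \<in> e}"

definition is_matching :: "'a set set \<Rightarrow> 'a farc set \<Rightarrow> bool" where
  "is_matching E m \<longleftrightarrow> m \<subseteq> fp_arcs E \<and>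
     (\<forall>a\<in>m. \<forall>b\<in>m. a \<noteq> b \<longrightarrow> {fst a, snd a} \<inter> {fst b, snd b} = {})"

definition fm_arcs :: "'a set set \<Rightarrow> 'a farc set \<Rightarrow> 'a farc set" where
  "fm_arcs E m = (fp_arcs E - m) \<union> (\<lambda>(x, y). (y, x)) ` m"

definition directed_cycle :: "('b \<times> 'b) set \<Rightarrow> ('b \<times> 'b) set \<Rightarrow> bool" where
  "directed_cycle A C \<longleftrightarrow> (\<exists>xs. length xs \<ge> 2 \<and> distinct xs \<and>
     C = {(xs ! i, xs ! ((i + 1) mod length xs)) | i. i < length xs} \<and> C \<subseteq> A)"

definition J :: "'a set set \<Rightarrow> 'a farc set \<Rightarrow> nat" where
  "J E m = card {C. directed_cycle (fm_arcs E m) C}"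

definition simplex :: "'a set set \<Rightarrow> 'a farc set \<Rightarrow> bool" where
  "simplex E \<sigma> \<longleftrightarrow> \<sigma> \<noteq> {} \<and> is_matching E \<sigma>"

definition codim1_face :: "'a farc set \<Rightarrow> 'a farc set \<Rightarrow> bool" where
  "codim1_face \<tau> \<sigma> \<longleftrightarrow> \<tau> \<noteq> {} \<and> (\<exists>a\<in>\<sigma>. \<tau> = \<sigma> - {a})"

text \<open>Chains over F_2: finite sets of simplices (mod-2 formal sums).
  partial_d of a basis simplex = faces with different J (since partial_d = partial - partial_J).\<close>
definition dd_simplex :: "'a set set \<Rightarrow> 'a farc set \<Rightarrow> 'a farc set set" where
  "dd_simplex E \<sigma> = {\<tau>. codim1_face \<tau> \<sigma> \<and> J E \<tau> \<noteq> J E \<sigma>}"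

definition dd :: "'a set set \<Rightarrow> 'a farc set set \<Rightarrow> 'a farc set set" where
  "dd E c = {\<tau>. odd (card {\<sigma>\<in>c. \<tau> \<in> dd_simplex E \<sigma>})}"

end

theory Submission imports Defs begin

text \<open>
  In \<open>F\<^sub>m(G)\<close> a node with an incoming arc has at most one outgoing arc: a vertex node is left
  only along its reversed matched arc, and an edge node can only be entered along its reversed
  matched arc \<open>e \<rightarrow> w\<close>, after which it can only be left towards the other endpoint of \<open>e\<close>.
  Hence two directed cycles sharing an arc coincide. Removing an arc \<open>a\<close> from \<open>m\<close> makes the
  edge node of \<open>a\<close> a source, so it destroys the (at most one) cycle through the reversal of \<open>a\<close>
  and creates none: \<open>J\<close> drops by at most one. For \<open>\<partial>\<^sub>d \<circ> \<partial>\<^sub>d\<close>: if \<open>\<rho> = \<sigma> - {a, b}\<close> is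
  reached via \<open>\<sigma> - {a}\<close>, then the cycles of \<open>F\<^sub>\<sigma>(G)\<close> through \<open>a\<close> and through \<open>b\<close> are distinct,
  so each survives the removal of the other arc and \<open>\<rho>\<close> is also reached via \<open>\<sigma> - {b}\<close>.
\<close>

lemma directed_cycle_subset: "directed_cycle A C \<Longrightarrow> C \<subseteq> A"
  unfolding directed_cycle_def by auto

lemma directed_cycle_mono: "directed_cycle A C \<Longrightarrow> C \<subseteq> B \<Longrightarrow> directed_cycle B C"
  unfolding directed_cycle_def by auto

lemma directed_cycle_walk:
  assumes "directed_cycle A C" "(x, y) \<in> C"
  obtains f where "f 0 = x" "C = range (\<lambda>k. (f k, f (Suc k)))"
proof -
  obtain xs where xs: "length xs \<ge> 2"
    "C = {(xs ! i, xs ! ((i + 1) mod length xs)) | i. i < length xs}"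
    using assms(1) unfolding directed_cycle_def by blast
  let ?n = "length xs"
  obtain i0 where i0: "i0 < ?n" "x = xs ! i0" using assms(2) xs(2) by auto
  define f where "f k = xs ! ((i0 + k) mod ?n)" for k
  have "C = range (\<lambda>k. (f k, f (Suc k)))"
  proof
    show "C \<subseteq> range (\<lambda>k. (f k, f (Suc k)))"
    proof
      fix p assume "p \<in> C"
      then obtain i where i: "i < ?n" "p = (xs ! i, xs ! ((i + 1) mod ?n))" using xs(2) by auto
      define k where "k = i + ?n - i0"
      have "i0 + k = i + ?n" "i0 + Suc k = (i + 1) + ?n" using i0 unfolding k_def by simp_all
      then have "(i0 + k) mod ?n = i" "(i0 + Suc k) mod ?n = (i + 1) mod ?n"
        using i(1) by (simp_all only: mod_add_self2) simp
      then have "p = (f k, f (Suc k))" using i(2) unfolding f_def by simp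
      then show "p \<in> range (\<lambda>k. (f k, f (Suc k)))" by (rule range_eqI)
    qed
  next
    show "range (\<lambda>k. (f k, f (Suc k))) \<subseteq> C"
    proof (rule image_subsetI)
      fix k
      let ?j = "(i0 + k) mod ?n"
      have "?j < ?n" using xs(1) by (intro mod_less_divisor) linarith
      moreover have "(f k, f (Suc k)) = (xs ! ?j, xs ! ((?j + 1) mod ?n))"
        unfolding f_def by (simp add: mod_Suc_eq)
      ultimately show "(f k, f (Suc k)) \<in> C" unfolding xs(2) by blast
    qed
  qed
  moreover have "f 0 = x" using i0 unfolding f_def by simp
  ultimately show thesis using that by blast
qed

lemma directed_cycle_pred:
  assumes "directed_cycle A C" "(x, y) \<in> C"
  obtains z where "(z, x) \<in> C"
proof -
  obtain xs where xs: "length xs \<ge> 2"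
    "C = {(xs ! i, xs ! ((i + 1) mod length xs)) | i. i < length xs}"
    using assms(1) unfolding directed_cycle_def by blast
  let ?n = "length xs"
  obtain i where i: "i < ?n" "x = xs ! i" using assms(2) xs(2) by auto
  define j where "j = (if i = 0 then ?n - 1 else i - 1)"
  have "j < ?n" "(j + 1) mod ?n = i" using xs(1) i(1) unfolding j_def by auto
  then have "(xs ! j, x) \<in> C" using xs(2) i(2) by force
  then show thesis using that by blast
qed

text \<open>Functionality is only required at nodes with a predecessor, which every node of a cycle has.\<close>

lemma directed_cycle_eq_if_functional:
  assumes functional: "\<And>z x y y'. (z, x) \<in> A \<Longrightarrow> (x, y) \<in> A \<Longrightarrow> (x, y') \<in> A \<Longrightarrow> y = y'"
    and C1: "directed_cycle A C1" and C2: "directed_cycle A C2"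
    and "(x, y1) \<in> C1" "(x, y2) \<in> C2"
  shows "C1 = C2"
proof -
  obtain f where f: "f 0 = x" "C1 = range (\<lambda>k. (f k, f (Suc k)))"
    using directed_cycle_walk[OF C1 \<open>(x, y1) \<in> C1\<close>] .
  obtain g where g: "g 0 = x" "C2 = range (\<lambda>k. (g k, g (Suc k)))"
    using directed_cycle_walk[OF C2 \<open>(x, y2) \<in> C2\<close>] .
  have "f k = g k" for k
  proof (induction k)
    case 0
    show ?case using f(1) g(1) by simp
  next
    case (Suc k)
    have f_arc: "(f k, f (Suc k)) \<in> C1" using f(2) by blast
    have g_arc: "(f k, g (Suc k)) \<in> C2" unfolding Suc.IH using g(2) by blast
    obtain z where "(z, f k) \<in> C1" using directed_cycle_pred[OF C1 f_arc] .
    then show ?case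
      using f_arc g_arc directed_cycle_subset[OF C1] directed_cycle_subset[OF C2]
      by (intro functional[of z "f k"]) auto
  qed
  then show ?thesis using f(2) g(2) by simp
qed

lemma simple_graph_finite_edges: "simple_graph V E \<Longrightarrow> finite E"
  unfolding simple_graph_def by (meson Pow_iff finite_Pow_iff finite_subset subsetI)

lemma finite_fp_arcs:
  assumes "simple_graph V E"
  shows "finite (fp_arcs E)"
proof (rule finite_subset)
  show "fp_arcs E \<subseteq> Inr ` E \<times> Inl ` V"
    using assms unfolding fp_arcs_def simple_graph_def by auto
  show "finite (Inr ` E \<times> Inl ` V)"
    using assms simple_graph_finite_edges unfolding simple_graph_def by blast
qed

lemma finite_matching: "simple_graph V E \<Longrightarrow> is_matching E m \<Longrightarrow> finite m"
  using finite_fp_arcs unfolding is_matching_def by (metis finite_subset)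

lemma is_matching_subset: "is_matching E m \<Longrightarrow> m' \<subseteq> m \<Longrightarrow> is_matching E m'"
  unfolding is_matching_def by blast

lemma fp_arcsE:
  assumes "a \<in> fp_arcs E"
  obtains e v where "a = (Inr e, Inl v)" "e \<in> E" "v \<in> e"
  using assms unfolding fp_arcs_def by blast

lemma fm_arcs_swap: "fm_arcs E m = (fp_arcs E - m) \<union> prod.swap ` m"
  unfolding fm_arcs_def prod.swap_def by (simp add: case_prod_beta')

lemma fm_arcs_functional:
  assumes G: "simple_graph V E" and m: "is_matching E m"
    and zx: "(z, x) \<in> fm_arcs E m" and xy: "(x, y) \<in> fm_arcs E m" and xy': "(x, y') \<in> fm_arcs E m"
  shows "y = y'"
proof (cases x)
  case (Inl v)
  then have "(x, y) \<notin> fp_arcs E" "(x, y') \<notin> fp_arcs E" by (auto elim: fp_arcsE)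
  then have "(y, x) \<in> m" "(y', x) \<in> m" using xy xy' unfolding fm_arcs_swap by auto
  then show ?thesis using m unfolding is_matching_def by fastforce
next
  case (Inr e)
  then have "(z, x) \<notin> fp_arcs E" by (auto elim: fp_arcsE)
  then have matched: "(x, z) \<in> m" using zx unfolding fm_arcs_swap by auto
  then have "(x, z) \<in> fp_arcs E" using m unfolding is_matching_def by auto
  then obtain w where w: "z = Inl w" "w \<in> e" "e \<in> E" using Inr unfolding fp_arcs_def by auto
  have "(x, y) \<notin> prod.swap ` m" "(x, y') \<notin> prod.swap ` m"
    using Inr m unfolding is_matching_def fp_arcs_def by auto
  then have unmatched: "(x, y) \<in> fp_arcs E - m" "(x, y') \<in> fp_arcs E - m"
    using xy xy' unfolding fm_arcs_swap by auto
  then obtain u u' where u: "y = Inl u" "u \<in> e" "y' = Inl u'" "u' \<in> e"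
    using Inr unfolding fp_arcs_def by auto
  have "u \<noteq> w" "u' \<noteq> w" using matched unmatched w u by auto
  moreover have "card e = 2" using G w unfolding simple_graph_def by auto
  ultimately show ?thesis using u w by (auto simp: card_2_iff)
qed

definition cycles :: "'a set set \<Rightarrow> 'a farc set \<Rightarrow> 'a farc set set" where
  "cycles E m = {C. directed_cycle (fm_arcs E m) C}"

definition on_cycle :: "'a set set \<Rightarrow> 'a farc set \<Rightarrow> 'a farc \<Rightarrow> bool" where
  "on_cycle E m a \<longleftrightarrow> (\<exists>C\<in>cycles E m. prod.swap a \<in> C)"

lemma J_eq_card_cycles: "J E m = card (cycles E m)"
  unfolding J_def cycles_def ..

lemma finite_cycles:
  assumes "simple_graph V E" "is_matching E m"
  shows "finite (cycles E m)"
proof (rule finite_subset)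
  show "cycles E m \<subseteq> Pow (fm_arcs E m)"
    unfolding cycles_def by (auto dest: directed_cycle_subset)
  show "finite (Pow (fm_arcs E m))"
    using finite_fp_arcs[OF assms(1)] finite_matching[OF assms] unfolding fm_arcs_swap by simp
qed

lemma cycles_eq_if_common_arc:
  assumes "simple_graph V E" "is_matching E m" "C1 \<in> cycles E m" "C2 \<in> cycles E m"
    "p \<in> C1" "p \<in> C2"
  shows "C1 = C2"
proof -
  obtain x y where p: "p = (x, y)" by fastforce
  show ?thesis
    using assms(3-6) unfolding cycles_def p
    by (intro directed_cycle_eq_if_functional[OF fm_arcs_functional[OF assms(1,2)]]) auto
qed

lemma fm_arcs_remove:
  assumes m: "is_matching E m" and a: "a \<in> m"
  shows "fm_arcs E (m - {a}) = (fm_arcs E m - {prod.swap a}) \<union> {a}"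
proof -
  have "a \<in> fp_arcs E" using assms unfolding is_matching_def by auto
  then obtain e v where a_def: "a = (Inr e, Inl v)" by (auto elim: fp_arcsE)
  have "prod.swap a \<notin> fp_arcs E" "a \<notin> prod.swap ` m"
    using a_def m unfolding is_matching_def fp_arcs_def by auto
  then show ?thesis unfolding fm_arcs_swap using a \<open>a \<in> fp_arcs E\<close>
    by (auto simp: inj_image_mem_iff) (metis swap_simp swap_swap)
qed

lemma fm_arcs_remove_no_arc_into:
  assumes m: "is_matching E m" and a: "a \<in> m"
  shows "(z, fst a) \<notin> fm_arcs E (m - {a})"
proof
  assume za: "(z, fst a) \<in> fm_arcs E (m - {a})"
  have "a \<in> fp_arcs E" using assms unfolding is_matching_def by auto
  then obtain e v where a_def: "a = (Inr e, Inl v)" by (auto elim: fp_arcsE)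
  then have "(z, fst a) \<notin> fp_arcs E" by (auto elim: fp_arcsE)
  then obtain b where "b \<in> m" "b \<noteq> a" "fst b = fst a"
    using za unfolding fm_arcs_swap by force
  then show False using m a unfolding is_matching_def by blast
qed

lemma directed_cycle_remove_iff:
  assumes m: "is_matching E m" and a: "a \<in> m"
  shows "directed_cycle (fm_arcs E (m - {a})) C \<longleftrightarrow>
         directed_cycle (fm_arcs E m) C \<and> prod.swap a \<notin> C"
proof
  assume C: "directed_cycle (fm_arcs E (m - {a})) C"
  have "a \<notin> C"
  proof
    assume "a \<in> C"
    then obtain z where "(z, fst a) \<in> C" using directed_cycle_pred[OF C, of "fst a" "snd a"] by auto
    then show False using directed_cycle_subset[OF C] fm_arcs_remove_no_arc_into[OF m a] by blast
  qed
  then have "C \<subseteq> fm_arcs E m - {prod.swap a}"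
    using directed_cycle_subset[OF C] fm_arcs_remove[OF m a] by auto
  then show "directed_cycle (fm_arcs E m) C \<and> prod.swap a \<notin> C"
    using directed_cycle_mono[OF C] by auto
next
  assume C: "directed_cycle (fm_arcs E m) C \<and> prod.swap a \<notin> C"
  then have "C \<subseteq> fm_arcs E (m - {a})"
    using directed_cycle_subset[of "fm_arcs E m" C] fm_arcs_remove[OF m a] by blast
  then show "directed_cycle (fm_arcs E (m - {a})) C" using C directed_cycle_mono by blast
qed

lemma cycles_remove:
  assumes "is_matching E m" "a \<in> m"
  shows "cycles E (m - {a}) = {C \<in> cycles E m. prod.swap a \<notin> C}"
  using directed_cycle_remove_iff[OF assms] unfolding cycles_def by auto

lemma J_remove:
  assumes G: "simple_graph V E" and m: "is_matching E m" and a: "a \<in> m"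
  shows "J E m = J E (m - {a}) + (if on_cycle E m a then 1 else 0)"
proof (cases "on_cycle E m a")
  case True
  then obtain C0 where C0: "C0 \<in> cycles E m" "prod.swap a \<in> C0" unfolding on_cycle_def by auto
  then have "cycles E (m - {a}) = cycles E m - {C0}"
    using cycles_remove[OF m a] cycles_eq_if_common_arc[OF G m] by blast
  moreover have "card (cycles E m) > 0" using C0(1) finite_cycles[OF G m] card_gt_0_iff by blast
  ultimately show ?thesis using True C0(1) by (simp add: J_eq_card_cycles)
next
  case False
  then have "cycles E (m - {a}) = cycles E m"
    using cycles_remove[OF m a] unfolding on_cycle_def by auto
  then show ?thesis using False by (simp add: J_eq_card_cycles)
qed

lemma J_codim1_face:
  assumes G: "simple_graph V E" and "simplex E \<sigma>" "codim1_face \<tau> \<sigma>" "J E \<tau> < J E \<sigma>"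
  shows "J E \<tau> = J E \<sigma> - 1"
proof -
  obtain a where a: "a \<in> \<sigma>" "\<tau> = \<sigma> - {a}" using assms(3) unfolding codim1_face_def by auto
  have "is_matching E \<sigma>" using assms(2) unfolding simplex_def by auto
  then show ?thesis using J_remove[OF G _ a(1)] assms(4) a(2) by (auto split: if_splits)
qed

lemma dd_simplex_iff:
  assumes G: "simple_graph V E" and m: "is_matching E \<sigma>"
  shows "\<tau> \<in> dd_simplex E \<sigma> \<longleftrightarrow> (\<exists>a\<in>\<sigma>. \<tau> = \<sigma> - {a} \<and> \<tau> \<noteq> {} \<and> on_cycle E \<sigma> a)"
  unfolding dd_simplex_def codim1_face_def using J_remove[OF G m] by force

lemma on_cycle_exchange:
  assumes G: "simple_graph V E" and m: "is_matching E \<sigma>"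
    and ab: "a \<in> \<sigma>" "b \<in> \<sigma>" "a \<noteq> b"
    and a_on: "on_cycle E \<sigma> a" and b_on: "on_cycle E (\<sigma> - {a}) b"
  shows "on_cycle E \<sigma> b" "on_cycle E (\<sigma> - {b}) a"
proof -
  obtain C2 where C2: "C2 \<in> cycles E \<sigma>" "prod.swap a \<notin> C2" "prod.swap b \<in> C2"
    using b_on cycles_remove[OF m ab(1)] unfolding on_cycle_def by auto
  obtain C1 where C1: "C1 \<in> cycles E \<sigma>" "prod.swap a \<in> C1" using a_on unfolding on_cycle_def by auto
  have "prod.swap b \<notin> C1" using cycles_eq_if_common_arc[OF G m C1(1) C2(1)] C1 C2 by blast
  then show "on_cycle E \<sigma> b" "on_cycle E (\<sigma> - {b}) a"
    using C1 C2 cycles_remove[OF m ab(2)] unfolding on_cycle_def by auto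
qed

lemma dd_simplex_twice_even:
  assumes G: "simple_graph V E" and m: "is_matching E \<sigma>"
  shows "even (card {\<tau> \<in> dd_simplex E \<sigma>. \<rho> \<in> dd_simplex E \<tau>})"
proof (cases "{\<tau> \<in> dd_simplex E \<sigma>. \<rho> \<in> dd_simplex E \<tau>} = {}")
  case False
  then obtain \<tau>0 where \<tau>0: "\<tau>0 \<in> dd_simplex E \<sigma>" "\<rho> \<in> dd_simplex E \<tau>0" by auto
  then obtain a where a: "a \<in> \<sigma>" "\<tau>0 = \<sigma> - {a}" "on_cycle E \<sigma> a"
    using dd_simplex_iff[OF G m] by auto
  have m_a: "is_matching E (\<sigma> - {a})" using is_matching_subset[OF m] by blast
  obtain b where b: "b \<in> \<sigma> - {a}" "\<rho> = \<sigma> - {a} - {b}" "\<rho> \<noteq> {}" "on_cycle E (\<sigma> - {a}) b"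
    using \<tau>0(2) dd_simplex_iff[OF G m_a] a(2) by auto
  then have ab: "b \<in> \<sigma>" "a \<noteq> b" by auto
  note exchange = on_cycle_exchange[OF G m a(1) ab a(3) b(4)]
  have m_b: "is_matching E (\<sigma> - {b})" using is_matching_subset[OF m] by blast
  have "{\<tau> \<in> dd_simplex E \<sigma>. \<rho> \<in> dd_simplex E \<tau>} = {\<sigma> - {a}, \<sigma> - {b}}"
  proof (intro equalityI subsetI)
    fix \<tau> assume "\<tau> \<in> {\<tau> \<in> dd_simplex E \<sigma>. \<rho> \<in> dd_simplex E \<tau>}"
    then have \<tau>: "\<tau> \<in> dd_simplex E \<sigma>" "\<rho> \<in> dd_simplex E \<tau>" by auto
    then obtain c where c: "c \<in> \<sigma>" "\<tau> = \<sigma> - {c}" using dd_simplex_iff[OF G m] by auto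
    then have "is_matching E \<tau>" using is_matching_subset[OF m] by blast
    then have "\<rho> \<subseteq> \<tau>" using \<tau>(2) dd_simplex_iff[OF G] by auto
    then have "c \<in> {a, b}" using b(2) c by blast
    then show "\<tau> \<in> {\<sigma> - {a}, \<sigma> - {b}}" using c(2) by blast
  next
    have "\<sigma> - {b} \<in> dd_simplex E \<sigma>"
      using dd_simplex_iff[OF G m] ab a(1) exchange(1) by blast
    moreover have "\<rho> = \<sigma> - {b} - {a}" using b(2) by blast
    then have "\<rho> \<in> dd_simplex E (\<sigma> - {b})"
      using dd_simplex_iff[OF G m_b] ab a(1) b(3) exchange(2) by blast
    ultimately show "\<tau> \<in> {\<tau> \<in> dd_simplex E \<sigma>. \<rho> \<in> dd_simplex E \<tau>}"
      if "\<tau> \<in> {\<sigma> - {a}, \<sigma> - {b}}" for \<tau>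
      using that \<tau>0 a(2) by blast
  qed
  moreover have "\<sigma> - {a} \<noteq> \<sigma> - {b}" using a(1) ab by auto
  ultimately show ?thesis by simp
qed (metis card.empty even_zero)

definition mod2_linear_ext :: "('b \<Rightarrow> 'b set) \<Rightarrow> 'b set \<Rightarrow> 'b set" where
  "mod2_linear_ext d c = {\<tau>. odd (card {\<sigma> \<in> c. \<tau> \<in> d \<sigma>})}"

lemma dd_eq_mod2_linear_ext: "dd E = mod2_linear_ext (dd_simplex E)"
  unfolding dd_def mod2_linear_ext_def ..

text \<open>Double counting of the pairs \<open>(\<sigma>, \<tau>)\<close> with \<open>\<sigma> \<in> c\<close>, \<open>\<tau> \<in> d \<sigma>\<close> and \<open>\<rho> \<in> d \<tau>\<close>.\<close>

lemma mod2_linear_ext_square_empty: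
  assumes c: "finite c" and fin: "\<And>\<sigma>. \<sigma> \<in> c \<Longrightarrow> finite (d \<sigma>)"
    and even: "\<And>\<sigma> \<rho>. \<sigma> \<in> c \<Longrightarrow> even (card {\<tau> \<in> d \<sigma>. \<rho> \<in> d \<tau>})"
  shows "mod2_linear_ext d (mod2_linear_ext d c) = {}"
proof -
  have "even (card {\<tau> \<in> mod2_linear_ext d c. \<rho> \<in> d \<tau>})" for \<rho>
  proof -
    define R where "R = {\<tau> \<in> (\<Union>\<sigma>\<in>c. d \<sigma>). \<rho> \<in> d \<tau>}"
    define f where "f \<tau> = card {\<sigma> \<in> c. \<tau> \<in> d \<sigma>}" for \<tau>
    have R: "finite R" unfolding R_def using c fin by auto
    have "\<tau> \<in> (\<Union>\<sigma>\<in>c. d \<sigma>)" if "odd (f \<tau>)" for \<tau>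
      using that unfolding f_def by (metis (mono_tags, lifting) UN_I card.empty empty_Collect_eq even_zero)
    then have "{\<tau> \<in> mod2_linear_ext d c. \<rho> \<in> d \<tau>} = {\<tau> \<in> R. odd (f \<tau>)}"
      unfolding R_def mod2_linear_ext_def f_def by auto
    moreover have "sum f R = (\<Sum>\<sigma>\<in>c. card {\<tau> \<in> d \<sigma>. \<rho> \<in> d \<tau>})"
    proof -
      have "sum f R = (\<Sum>\<tau>\<in>R. \<Sum>\<sigma>\<in>c. if \<tau> \<in> d \<sigma> then 1 else 0)"
        unfolding f_def using c by (simp add: sum.If_cases Int_def)
      also have "\<dots> = (\<Sum>\<sigma>\<in>c. \<Sum>\<tau>\<in>R. if \<tau> \<in> d \<sigma> then 1 else 0)"
        by (rule sum.swap)
      also have "\<dots> = (\<Sum>\<sigma>\<in>c. card {\<tau> \<in> d \<sigma>. \<rho> \<in> d \<tau>})"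
      proof (rule sum.cong)
        fix \<sigma> assume "\<sigma> \<in> c"
        then have "{\<tau> \<in> R. \<tau> \<in> d \<sigma>} = {\<tau> \<in> d \<sigma>. \<rho> \<in> d \<tau>}" unfolding R_def by auto
        then show "(\<Sum>\<tau>\<in>R. if \<tau> \<in> d \<sigma> then 1 else 0) = card {\<tau> \<in> d \<sigma>. \<rho> \<in> d \<tau>}"
          using R by (simp add: sum.If_cases Int_def)
      qed simp
      finally show ?thesis .
    qed
    then have "even (sum f R)" using even by (simp add: dvd_sum)
    ultimately show ?thesis using even_sum_iff[OF R, of f] by simp
  qed
  then show ?thesis unfolding mod2_linear_ext_def[of d "mod2_linear_ext d c"] by auto
qed

theorem mainTheorem6:
  fixes V :: "'a set" and E :: "'a set set"
  assumes "simple_graph V E"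
  shows "(\<forall>\<sigma> \<tau>. simplex E \<sigma> \<and> codim1_face \<tau> \<sigma> \<and> J E \<tau> < J E \<sigma> \<longrightarrow>
            J E \<tau> = J E \<sigma> - 1)
       \<and> (\<forall>c. finite c \<and> (\<forall>\<sigma>\<in>c. simplex E \<sigma>) \<longrightarrow> dd E (dd E c) = {})"
proof (intro conjI allI impI)
  fix \<sigma> \<tau>
  assume "simplex E \<sigma> \<and> codim1_face \<tau> \<sigma> \<and> J E \<tau> < J E \<sigma>"
  then show "J E \<tau> = J E \<sigma> - 1" using J_codim1_face[OF assms] by blast
next
  fix c :: "'a farc set set"
  assume c: "finite c \<and> (\<forall>\<sigma>\<in>c. simplex E \<sigma>)"
  then have m: "is_matching E \<sigma>" if "\<sigma> \<in> c" for \<sigma> using that unfolding simplex_def by auto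
  have "finite (dd_simplex E \<sigma>)" if "\<sigma> \<in> c" for \<sigma>
  proof (rule finite_subset)
    show "dd_simplex E \<sigma> \<subseteq> (\<lambda>a. \<sigma> - {a}) ` \<sigma>"
      unfolding dd_simplex_def codim1_face_def by auto
    show "finite ((\<lambda>a. \<sigma> - {a}) ` \<sigma>)" using finite_matching[OF assms m[OF that]] by simp
  qed
  then show "dd E (dd E c) = {}"
    unfolding dd_eq_mod2_linear_ext
    using mod2_linear_ext_square_empty c dd_simplex_twice_even[OF assms m] by blast
qed

end
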